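(* For every temporal oriented tree $\mathcal T$, the connectivity graph $G$ of $\mathcal T$ contains no anti-hole, i.e., no induced subgraph isomorphic to the complement of a cycle of length at least $5$.
   Context: A temporal digraph is a pair $(D,\lambda)$ with $D=(V,A)$ a finite digraph and $\lambda:A\to 2^{\{1,\dots,t_{\max}\}}$ giving the time-steps at which each arc is active. A temporal oriented tree $\mathcal T=(T,\lambda)$ is one whose underlying digraph $T$ is an orientation of a tree. A temporal path is a sequence $(v_1,v_2,t_1),\dots,(v_{k-1},v_k,t_{k-1})$ with pairwise distinct $v_i$, $\overrightarrow{v_iv_{i+1}}\in A$, $t_i\in\lambda(\overrightarrow{v_iv_{i+1}})$ and $t_1<\dots<t_{k-1}$. Two vertices $u\ne v$ are temporally connected if there is a temporal path from $u$ to $v$ or from $v$ to $u$. The connectivity graph of $\mathcal T$ is the undirected graph $G$ with $V(G)=V(T)$ and $uv\in E(G)$ iff $u\neq v$ and $u,v$ are temporally connected. *)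

theory Defs
  imports Main
begin

definition und_adj :: "('a \<times> 'a) set \<Rightarrow> 'a \<Rightarrow> 'a \<Rightarrow> bool" where
  "und_adj A u v \<longleftrightarrow> (u, v) \<in> A \<or> (v, u) \<in> A"

definition und_connected :: "'a set \<Rightarrow> ('a \<times> 'a) set \<Rightarrow> bool" where
  "und_connected V A \<longleftrightarrow>
     (\<forall>u\<in>V. \<forall>v\<in>V. (u, v) \<in> ({(x, y). x \<in> V \<and> y \<in> V \<and> und_adj A x y})\<^sup>*)"

definition und_cycle :: "'a set \<Rightarrow> ('a \<times> 'a) set \<Rightarrow> 'a list \<Rightarrow> bool" where
  "und_cycle V A cs \<longleftrightarrow> length cs \<ge> 3 \<and> distinct cs \<and> set cs \<subseteq> V \<and>
     (\<forall>i < length cs. und_adj A (cs ! i) (cs ! ((i + 1) mod length cs)))"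

definition oriented_tree :: "'a set \<Rightarrow> ('a \<times> 'a) set \<Rightarrow> bool" where
  "oriented_tree V A \<longleftrightarrow> finite V \<and> V \<noteq> {} \<and> A \<subseteq> V \<times> V \<and>
     (\<forall>v. (v, v) \<notin> A) \<and> (\<forall>u v. (u, v) \<in> A \<longrightarrow> (v, u) \<notin> A) \<and>
     und_connected V A \<and> (\<nexists>cs. und_cycle V A cs)"

definition temporal_path ::
  "('a \<times> 'a) set \<Rightarrow> ('a \<times> 'a \<Rightarrow> nat set) \<Rightarrow> 'a list \<Rightarrow> nat list \<Rightarrow> bool" where
  "temporal_path A lam vs ts \<longleftrightarrow> vs \<noteq> [] \<and> length ts = length vs - 1 \<and> distinct vs \<and>
     (\<forall>i < length ts. (vs ! i, vs ! Suc i) \<in> A \<and> ts ! i \<in> lam (vs ! i, vs ! Suc i)) \<and>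
     sorted_wrt (<) ts"

definition temporal_path_from_to ::
  "('a \<times> 'a) set \<Rightarrow> ('a \<times> 'a \<Rightarrow> nat set) \<Rightarrow> 'a \<Rightarrow> 'a \<Rightarrow> bool" where
  "temporal_path_from_to A lam u v \<longleftrightarrow>
     (\<exists>vs ts. temporal_path A lam vs ts \<and> hd vs = u \<and> last vs = v)"

definition conn_edge ::
  "'a set \<Rightarrow> ('a \<times> 'a) set \<Rightarrow> ('a \<times> 'a \<Rightarrow> nat set) \<Rightarrow> 'a \<Rightarrow> 'a \<Rightarrow> bool" where
  "conn_edge V A lam u v \<longleftrightarrow> u \<in> V \<and> v \<in> V \<and> u \<noteq> v \<and>
     (temporal_path_from_to A lam u v \<or> temporal_path_from_to A lam v u)"

definition has_antihole :: "'a set \<Rightarrow> ('a \<Rightarrow> 'a \<Rightarrow> bool) \<Rightarrow> bool" where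
  "has_antihole V E \<longleftrightarrow> (\<exists>k::nat. \<exists>f::nat \<Rightarrow> 'a. k \<ge> 5 \<and> inj_on f {0..<k} \<and> f ` {0..<k} \<subseteq> V \<and>
     (\<forall>i < k. \<forall>j < k. i \<noteq> j \<longrightarrow>
        (E (f i) (f j) \<longleftrightarrow> \<not> (j = (i + 1) mod k \<or> i = (j + 1) mod k))))"

end

theory Submission
  imports Defs
begin

text \<open>In an oriented tree a directed path into x and a directed path out of x meet only in x,
  since otherwise the unique tree path from a common vertex to x would use the last edge into x
  in both directions. Hence temporal paths y \<leadsto> x \<leadsto> z concatenate to the tree path
  from y to z, and x lies on every tree walk from y to z. Each inner vertex of a temporal path
  is temporally connected to both its ends, so a connectivity edge u v is realised by a tree
  walk through u, v and common neighbours of u and v only.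

  Now let u, x, w be anti-hole vertices with u and w both adjacent to x. The two cycle
  neighbours e, d of x are non-adjacent to x but adjacent to each other, and for a suitable
  order u e d w is a path in the anti-hole; it yields a tree walk from u to w avoiding x.
  So no anti-hole vertex is the middle of two temporal paths between anti-hole vertices:
  along every anti-hole edge exactly one end has an outgoing temporal path. This two-colours
  the anti-hole, which is impossible because for k \<ge> 5 it contains the 5-cycle
  0, 2, 4, 1, 3.\<close>

fun uwalk :: "('a \<times> 'a) set \<Rightarrow> 'a list \<Rightarrow> bool" where
  "uwalk A (x # y # r) \<longleftrightarrow> und_adj A x y \<and> uwalk A (y # r)"
| "uwalk A _ \<longleftrightarrow> True"

fun dwalk :: "('a \<times> 'a) set \<Rightarrow> 'a list \<Rightarrow> bool" where
  "dwalk A (x # y # r) \<longleftrightarrow> (x, y) \<in> A \<and> dwalk A (y # r)"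
| "dwalk A _ \<longleftrightarrow> True"

lemma und_adj_sym: "und_adj A x y \<longleftrightarrow> und_adj A y x"
  by (auto simp: und_adj_def)

lemma uwalk_Cons: "uwalk A (x # xs) \<longleftrightarrow> uwalk A xs \<and> (xs \<noteq> [] \<longrightarrow> und_adj A x (hd xs))"
  by (cases xs) auto

lemma dwalk_Cons: "dwalk A (x # xs) \<longleftrightarrow> dwalk A xs \<and> (xs \<noteq> [] \<longrightarrow> (x, hd xs) \<in> A)"
  by (cases xs) auto

lemma uwalk_append:
  "uwalk A (xs @ ys) \<longleftrightarrow>
     uwalk A xs \<and> uwalk A ys \<and> (xs \<noteq> [] \<longrightarrow> ys \<noteq> [] \<longrightarrow> und_adj A (last xs) (hd ys))"
  by (induction xs) (auto simp: uwalk_Cons)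

lemma dwalk_append:
  "dwalk A (xs @ ys) \<longleftrightarrow>
     dwalk A xs \<and> dwalk A ys \<and> (xs \<noteq> [] \<longrightarrow> ys \<noteq> [] \<longrightarrow> (last xs, hd ys) \<in> A)"
  by (induction xs) (auto simp: dwalk_Cons)

lemma uwalk_rev [simp]: "uwalk A (rev xs) \<longleftrightarrow> uwalk A xs"
  by (induction xs) (auto simp: uwalk_append uwalk_Cons und_adj_sym last_rev)

lemma dwalk_imp_uwalk: "dwalk A xs \<Longrightarrow> uwalk A xs"
  by (induction xs rule: dwalk.induct) (auto simp: und_adj_def)

lemma dwalk_nthI: "(\<And>i. Suc i < length xs \<Longrightarrow> (xs ! i, xs ! Suc i) \<in> A) \<Longrightarrow> dwalk A xs"
proof (induction xs rule: dwalk.induct)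
  case (1 A x y r)
  then show ?case by (fastforce simp del: nth_Cons_Suc)
qed simp_all

lemma uwalk_nth: "uwalk A xs \<Longrightarrow> Suc i < length xs \<Longrightarrow> und_adj A (xs ! i) (xs ! Suc i)"
  by (induction xs arbitrary: i rule: uwalk.induct) (auto simp: nth_Cons split: nat.split)

lemma uwalk_set_subset:
  "A \<subseteq> V \<times> V \<Longrightarrow> uwalk A xs \<Longrightarrow> xs \<noteq> [] \<Longrightarrow> hd xs \<in> V \<Longrightarrow> set xs \<subseteq> V"
  by (induction xs rule: uwalk.induct) (auto simp: und_adj_def)

lemma uwalk_join:
  assumes "uwalk A W1" "uwalk A W2" "W1 \<noteq> []" "W2 \<noteq> []" "last W1 = hd W2"
  shows "uwalk A (W1 @ tl W2)" "W1 @ tl W2 \<noteq> []" "hd (W1 @ tl W2) = hd W1"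
    "last (W1 @ tl W2) = last W2" "set (W1 @ tl W2) \<subseteq> set W1 \<union> set W2"
proof -
  obtain h t where W2: "W2 = h # t" using assms(4) by (cases W2) auto
  then show "uwalk A (W1 @ tl W2)" using assms by (auto simp: uwalk_append uwalk_Cons)
  show "last (W1 @ tl W2) = last W2" using assms(5) W2 by (cases t) auto
qed (use assms in \<open>auto simp: list.set_sel(2)\<close>)

lemma uwalk_shortcut:
  assumes "uwalk A xs" "xs \<noteq> []"
  obtains ys where "uwalk A ys" "distinct ys" "ys \<noteq> []" "hd ys = hd xs" "last ys = last xs"
    "set ys \<subseteq> set xs"
  using assms
proof (induction xs arbitrary: thesis)
  case (Cons x xs)
  show ?case
  proof (cases "xs = []")
    case True
    then show ?thesis using Cons.prems(1)[of "[x]"] by auto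
  next
    case False
    then obtain ys where ys: "uwalk A ys" "distinct ys" "ys \<noteq> []" "hd ys = hd xs"
      "last ys = last xs" "set ys \<subseteq> set xs"
      using Cons.IH Cons.prems(2) by (auto simp: uwalk_Cons)
    show ?thesis
    proof (cases "x \<in> set ys")
      case True
      then obtain ys1 ys2 where "ys = ys1 @ x # ys2" by (meson split_list)
      then show ?thesis using Cons.prems(1)[of "x # ys2"] ys False by (auto simp: uwalk_append)
    next
      case False
      then show ?thesis using Cons.prems(1)[of "x # ys"] Cons.prems(2) ys \<open>xs \<noteq> []\<close>
        by (auto simp: uwalk_Cons)
    qed
  qed
qed simp

lemma und_cycle_of_closed_walk:
  assumes "A \<subseteq> V \<times> V" "uwalk A cs" "distinct cs" "length cs \<ge> 3"
    and closing: "und_adj A (last cs) (hd cs)"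
  shows "und_cycle V A cs"
proof -
  have ne: "cs \<noteq> []" using assms(4) by auto
  have "hd cs \<in> V" using closing assms(1) by (auto simp: und_adj_def)
  then have "set cs \<subseteq> V" using uwalk_set_subset[OF assms(1,2) ne] by blast
  moreover have "und_adj A (cs ! i) (cs ! ((i + 1) mod length cs))" if "i < length cs" for i
  proof (cases "Suc i < length cs")
    case True
    then show ?thesis using uwalk_nth[OF assms(2)] by simp
  next
    case False
    then have "i = length cs - 1" using that by simp
    then show ?thesis using closing ne by (simp add: last_conv_nth hd_conv_nth)
  qed
  ultimately show ?thesis using assms(3,4) unfolding und_cycle_def by blast
qed

text \<open>The cycle follows the first path up to its first vertex on the second and returns
  along the second.\<close>

lemma two_paths_und_cycle:
  assumes "A \<subseteq> V \<times> V"
    and p: "uwalk A (a # p)" "distinct (a # p)" and q: "uwalk A (a # q)" "distinct (a # q)"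
    and "p \<noteq> []" "q \<noteq> []" "hd p \<noteq> hd q" "last p = last q"
  shows "\<exists>cs. und_cycle V A cs"
proof -
  obtain p1 m p2 where sp: "p = p1 @ m # p2" "m \<in> set q" "\<forall>y\<in>set p1. y \<notin> set q"
    using split_list_first_prop[of p "\<lambda>m. m \<in> set q"] assms(6-9) by (metis last_in_set)
  obtain q1 q2 where sq: "q = q1 @ m # q2" using sp(2) by (meson split_list)
  define cs where "cs = (a # p1 @ [m]) @ rev q1"
  have "uwalk A ((a # p1 @ [m]) @ p2)" "uwalk A ((a # q1 @ [m]) @ q2)"
    using p(1) q(1) sp(1) sq by simp_all
  then have "uwalk A (a # p1 @ [m])" "uwalk A (rev (q1 @ [m]))"
    by (simp_all add: uwalk_append uwalk_Cons hd_rev und_adj_sym del: append_Cons)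
  then have walk: "uwalk A cs" unfolding cs_def uwalk_append by (auto simp: uwalk_Cons)
  have "distinct cs" unfolding cs_def using p(2) q(2) sp sq by auto
  moreover have "length cs \<ge> 3"
    using assms(8) sp sq unfolding cs_def by (cases p1; cases q1) auto
  moreover have "und_adj A (last cs) (hd cs)"
    using q(1) assms(7) sq unfolding cs_def
    by (cases q1) (auto simp: uwalk_Cons und_adj_sym)
  ultimately show ?thesis using und_cycle_of_closed_walk[OF assms(1) walk] by blast
qed

lemma oriented_tree_unique_path:
  assumes T: "oriented_tree V A"
  shows "\<lbrakk>uwalk A p; distinct p; uwalk A q; distinct q; p \<noteq> []; q \<noteq> [];
          hd p = hd q; last p = last q\<rbrakk> \<Longrightarrow> p = q"
proof (induction p arbitrary: q)
  case (Cons a p)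
  obtain q' where q: "q = a # q'" using Cons.prems(6,7) by (cases q) auto
  consider "p = []" | "q' = []" | "p \<noteq> []" "q' \<noteq> []" "hd p = hd q'"
    | "p \<noteq> []" "q' \<noteq> []" "hd p \<noteq> hd q'"
    by blast
  then show ?case
  proof cases
    case 1
    then show ?thesis using Cons.prems(4,8) q by (cases q' rule: rev_cases) auto
  next
    case 2
    then show ?thesis using Cons.prems(2,8) q by (cases p rule: rev_cases) auto
  next
    case 3
    then show ?thesis using Cons.IH[of q'] Cons.prems q by (auto simp: uwalk_Cons)
  next
    case 4
    have "A \<subseteq> V \<times> V" using T by (simp add: oriented_tree_def)
    from two_paths_und_cycle[OF this, of a p q'] 4 Cons.prems q
    have "\<exists>cs. und_cycle V A cs" by auto
    then show ?thesis using T by (simp add: oriented_tree_def)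
  qed
qed simp

lemma oriented_tree_path_subset_walk:
  assumes T: "oriented_tree V A" and P: "uwalk A P" "distinct P" "P \<noteq> []"
    and W: "uwalk A W" "W \<noteq> []" "hd W = hd P" "last W = last P"
  shows "set P \<subseteq> set W"
proof -
  obtain ys where ys: "uwalk A ys" "distinct ys" "ys \<noteq> []" "hd ys = hd W" "last ys = last W"
    "set ys \<subseteq> set W"
    using uwalk_shortcut[OF W(1,2)] by blast
  have "P = ys" using oriented_tree_unique_path[OF T P(1,2) ys(1,2) P(3) ys(3)] ys W by simp
  then show ?thesis using ys(6) by simp
qed

text \<open>The tree path from a common vertex w to x would be traversed towards x by the first
  path and away from x by the second, so the edge at x would carry arcs in both
  directions.\<close>

lemma oriented_tree_dpaths_meet_only_at_junction:
  assumes T: "oriented_tree V A"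
    and P: "dwalk A P" "distinct P" "P \<noteq> []" "last P = x"
    and Q: "dwalk A Q" "distinct Q" "Q \<noteq> []" "hd Q = x"
  shows "set P \<inter> set Q \<subseteq> {x}"
proof
  fix w assume w: "w \<in> set P \<inter> set Q"
  show "w \<in> {x}"
  proof (rule ccontr)
    assume "w \<notin> {x}"
    obtain P1 P2 where "P = P1 @ w # P2" using w by (meson IntD1 split_list)
    moreover have "P2 \<noteq> []" using calculation P(4) \<open>w \<notin> {x}\<close> by auto
    ultimately obtain P2' where sP: "P = P1 @ w # P2' @ [x]"
      using P(4) by (cases P2 rule: rev_cases) auto
    obtain Q1 Q2 where "Q = Q1 @ w # Q2" using w by (meson IntD2 split_list)
    moreover have "Q1 \<noteq> []" using calculation Q(4) \<open>w \<notin> {x}\<close> by auto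
    ultimately obtain Q1' where sQ: "Q = x # Q1' @ w # Q2"
      using Q(4) by (cases Q1) auto
    have "dwalk A ((P1 @ w # P2') @ [x])" "dwalk A (x # (Q1' @ w # Q2))"
      using P(1) Q(1) sP sQ by simp_all
    then have into_x: "(last (w # P2'), x) \<in> A" and out_of_x: "(x, hd (Q1' @ [w])) \<in> A"
      by (auto simp: dwalk_append dwalk_Cons hd_append)
    have "uwalk A (P1 @ (w # P2' @ [x]))" "uwalk A ((x # Q1' @ [w]) @ Q2)"
      using dwalk_imp_uwalk[OF P(1)] dwalk_imp_uwalk[OF Q(1)] sP sQ by simp_all
    then have "uwalk A (w # P2' @ [x])" "uwalk A (rev (x # Q1' @ [w]))"
      by (simp_all only: uwalk_append uwalk_rev)
    moreover have "distinct (w # P2' @ [x])" "distinct (rev (x # Q1' @ [w]))"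
      using P(2) Q(2) sP sQ by auto
    ultimately have "w # P2' @ [x] = rev (x # Q1' @ [w])"
      by (intro oriented_tree_unique_path[OF T]) auto
    then have "P2' = rev Q1'" by simp
    then have "last (w # P2') = hd (Q1' @ [w])" by (cases Q1') auto
    then show False using into_x out_of_x T unfolding oriented_tree_def by metis
  qed
qed

lemma oriented_tree_dpaths_junction_separates:
  assumes T: "oriented_tree V A"
    and P: "dwalk A P" "distinct P" "P \<noteq> []" "last P = x"
    and Q: "dwalk A Q" "distinct Q" "Q \<noteq> []" "hd Q = x"
    and W: "uwalk A W" "W \<noteq> []" "hd W = hd P" "last W = last Q"
  shows "x \<in> set W"
proof -
  obtain Q' where Q': "Q = x # Q'" using Q(3,4) by (cases Q) auto
  have "set P \<inter> set Q' = {}"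
    using oriented_tree_dpaths_meet_only_at_junction[OF T P Q] Q(2) Q' by auto
  then have "distinct (P @ Q')" using P(2) Q(2) Q' by simp
  moreover have "uwalk A (P @ Q')"
    using dwalk_imp_uwalk[OF P(1)] dwalk_imp_uwalk[OF Q(1)] P(4) Q'
    by (auto simp: uwalk_append uwalk_Cons)
  moreover have "P @ Q' \<noteq> []" "hd (P @ Q') = hd W" using P(3) W(3) by simp_all
  moreover have "last (P @ Q') = last W" using P(3,4) Q' W(4) by (cases Q') auto
  ultimately have "set (P @ Q') \<subseteq> set W"
    using oriented_tree_path_subset_walk[OF T _ _ _ W(1,2)] by metis
  then show ?thesis using P(3,4) by auto
qed

lemma temporal_path_dwalk:
  assumes "temporal_path A lam vs ts"
  shows "dwalk A vs" "distinct vs" "vs \<noteq> []"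
  using assms by (auto simp: temporal_path_def intro!: dwalk_nthI)

lemma temporal_path_take:
  assumes "temporal_path A lam vs ts" "i < length vs"
  shows "temporal_path A lam (take (Suc i) vs) (take i ts)"
  using assms by (auto simp: temporal_path_def)

lemma temporal_path_drop:
  assumes "temporal_path A lam vs ts" "i < length vs"
  shows "temporal_path A lam (drop i vs) (drop i ts)"
  using assms by (auto simp: temporal_path_def)

lemma temporal_path_inner_conn_edge:
  assumes AV: "A \<subseteq> V \<times> V" and tp: "temporal_path A lam vs ts" "hd vs \<in> V"
    and c: "c \<in> set vs" "c \<noteq> hd vs" "c \<noteq> last vs"
  shows "conn_edge V A lam c (hd vs)" "conn_edge V A lam c (last vs)"
proof -
  note vs = temporal_path_dwalk[OF tp(1)]
  have V: "set vs \<subseteq> V" using uwalk_set_subset[OF AV dwalk_imp_uwalk] vs tp(2) by blast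
  obtain i where i: "i < length vs" "vs ! i = c" using c(1) by (meson in_set_conv_nth)
  have "hd (take (Suc i) vs) = hd vs" "last (take (Suc i) vs) = c"
    using vs(3) i by (cases vs, simp_all add: take_Suc_conv_app_nth)
  then have "temporal_path_from_to A lam (hd vs) c"
    using temporal_path_take[OF tp(1) i(1)] unfolding temporal_path_from_to_def by metis
  moreover have "hd (drop i vs) = c" "last (drop i vs) = last vs"
    using i by (simp_all add: hd_drop_conv_nth)
  then have "temporal_path_from_to A lam c (last vs)"
    using temporal_path_drop[OF tp(1) i(1)] unfolding temporal_path_from_to_def by metis
  ultimately show "conn_edge V A lam c (hd vs)" "conn_edge V A lam c (last vs)"
    using V vs(3) c unfolding conn_edge_def by auto
qed

lemma conn_edge_uwalk:
  assumes AV: "A \<subseteq> V \<times> V" and e: "conn_edge V A lam u v"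
  obtains W where "uwalk A W" "W \<noteq> []" "hd W = u" "last W = v"
    "\<And>c. c \<in> set W \<Longrightarrow> c = u \<or> c = v \<or> conn_edge V A lam c u \<and> conn_edge V A lam c v"
proof -
  have uv: "u \<in> V" "v \<in> V" using e by (auto simp: conn_edge_def)
  from e consider (fwd) vs ts where "temporal_path A lam vs ts" "hd vs = u" "last vs = v"
    | (bwd) vs ts where "temporal_path A lam vs ts" "hd vs = v" "last vs = u"
    unfolding conn_edge_def temporal_path_from_to_def by blast
  then show thesis
  proof cases
    case fwd
    then show thesis
      using that[of vs] temporal_path_dwalk[OF fwd(1)] dwalk_imp_uwalk
        temporal_path_inner_conn_edge[OF AV fwd(1)] uv by auto
  next
    case bwd
    then show thesis
      using that[of "rev vs"] temporal_path_dwalk[OF bwd(1)] dwalk_imp_uwalk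
        temporal_path_inner_conn_edge[OF AV bwd(1)] uv by (auto simp: hd_rev last_rev)
  qed
qed

lemma temporal_path_from_to_asym:
  assumes T: "oriented_tree V A" and "temporal_path_from_to A lam u v" "u \<noteq> v"
  shows "\<not> temporal_path_from_to A lam v u"
proof
  assume "temporal_path_from_to A lam v u"
  then obtain vs ts where Q: "temporal_path A lam vs ts" "hd vs = v" "last vs = u"
    unfolding temporal_path_from_to_def by blast
  obtain ps ss where P: "temporal_path A lam ps ss" "hd ps = u" "last ps = v"
    using assms(2) unfolding temporal_path_from_to_def by blast
  have "u \<in> set ps \<inter> set vs"
    using P Q temporal_path_dwalk[OF P(1)] temporal_path_dwalk[OF Q(1)]
    by (metis IntI hd_in_set last_in_set)
  then show False
    using oriented_tree_dpaths_meet_only_at_junction[OF T temporal_path_dwalk[OF P(1)] P(3)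
        temporal_path_dwalk[OF Q(1)] Q(2)] assms(3) by auto
qed

lemma temporal_path_from_to_junction_separates:
  assumes T: "oriented_tree V A"
    and "temporal_path_from_to A lam y x" "temporal_path_from_to A lam x z"
    and W: "uwalk A W" "W \<noteq> []" "hd W = y" "last W = z"
  shows "x \<in> set W"
proof -
  obtain ps ss where P: "temporal_path A lam ps ss" "hd ps = y" "last ps = x"
    using assms(2) unfolding temporal_path_from_to_def by blast
  obtain qs ts where Q: "temporal_path A lam qs ts" "hd qs = x" "last qs = z"
    using assms(3) unfolding temporal_path_from_to_def by blast
  show ?thesis
    using oriented_tree_dpaths_junction_separates[OF T temporal_path_dwalk[OF P(1)] P(3)
        temporal_path_dwalk[OF Q(1)] Q(2) W(1,2)] P(2) Q(3) W(3,4) by simp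
qed

text \<open>Each of the three connectivity edges is realised by a tree walk avoiding x, since x is
  neither an end nor a common neighbour of its ends.\<close>

lemma temporal_relay_blocked_by_detour:
  assumes T: "oriented_tree V A"
    and ue: "conn_edge V A lam u e" and ed: "conn_edge V A lam e d" and dw: "conn_edge V A lam d w"
    and x: "x \<notin> {u, e, d, w}" "\<not> conn_edge V A lam x e" "\<not> conn_edge V A lam x d"
  shows "\<not> (temporal_path_from_to A lam u x \<and> temporal_path_from_to A lam x w)"
proof
  assume relay: "temporal_path_from_to A lam u x \<and> temporal_path_from_to A lam x w"
  have AV: "A \<subseteq> V \<times> V" using T by (simp add: oriented_tree_def)
  have sym: "conn_edge V A lam p q \<longleftrightarrow> conn_edge V A lam q p" for p q
    unfolding conn_edge_def by auto
  obtain W1 where W1: "uwalk A W1" "W1 \<noteq> []" "hd W1 = u" "last W1 = e"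
    and "\<And>c. c \<in> set W1 \<Longrightarrow> c = u \<or> c = e \<or> conn_edge V A lam c e"
    using conn_edge_uwalk[OF AV ue] by metis
  then have x1: "x \<notin> set W1" using x sym by blast
  obtain W2 where W2: "uwalk A W2" "W2 \<noteq> []" "hd W2 = e" "last W2 = d"
    and "\<And>c. c \<in> set W2 \<Longrightarrow> c = e \<or> c = d \<or> conn_edge V A lam c e"
    using conn_edge_uwalk[OF AV ed] by metis
  then have x2: "x \<notin> set W2" using x sym by blast
  obtain W3 where W3: "uwalk A W3" "W3 \<noteq> []" "hd W3 = d" "last W3 = w"
    and "\<And>c. c \<in> set W3 \<Longrightarrow> c = d \<or> c = w \<or> conn_edge V A lam c d"
    using conn_edge_uwalk[OF AV dw] by metis
  then have x3: "x \<notin> set W3" using x sym by blast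
  have "last W1 = hd W2" using W1(4) W2(3) by simp
  note W12 = uwalk_join[OF W1(1) W2(1) W1(2) W2(2) this]
  have "last (W1 @ tl W2) = hd W3" using W12(4) W2(4) W3(3) by simp
  note W = uwalk_join[OF W12(1) W3(1) W12(2) W3(2) this]
  have "hd ((W1 @ tl W2) @ tl W3) = u" "last ((W1 @ tl W2) @ tl W3) = w"
    using W(3,4) W12(3) W1(3) W3(4) by simp_all
  then have "x \<in> set ((W1 @ tl W2) @ tl W3)"
    using temporal_path_from_to_junction_separates[OF T _ _ W(1,2)] relay by blast
  then show False using W(5) W12(5) x1 x2 x3 by blast
qed

definition antihole_adj :: "nat \<Rightarrow> nat \<Rightarrow> nat \<Rightarrow> bool" where
  "antihole_adj k i j \<longleftrightarrow> i \<noteq> j \<and> \<not> (j = (i + 1) mod k \<or> i = (j + 1) mod k)"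

lemma antihole_adj_sym: "antihole_adj k i j \<longleftrightarrow> antihole_adj k j i"
  by (auto simp: antihole_adj_def)

text \<open>The two cycle neighbours p, s of j are adjacent to each other (as k \<ge> 5), and each
  anti-hole neighbour of j is adjacent to at least one of them; one of the two orders
  links a to b.\<close>

lemma antihole_adj_detour:
  assumes k: "5 \<le> k" and lt: "a < k" "j < k" "b < k" and "a \<noteq> b"
    and "antihole_adj k a j" "antihole_adj k j b"
  obtains e d where "e < k" "d < k" "e \<noteq> j" "d \<noteq> j" "\<not> antihole_adj k j e" "\<not> antihole_adj k j d"
    "antihole_adj k a e" "antihole_adj k e d" "antihole_adj k d b"
proof -
  define succ where "succ i = (i + 1) mod k" for i
  define p where "p = (if j = 0 then k - 1 else j - 1)"
  define s where "s = succ j"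
  have succ_inj: "x = y" if "x < k" "y < k" "succ x = succ y" for x y
    using that unfolding succ_def by (auto simp: mod_Suc split: if_splits)
  have ps: "p < k" "s < k" "succ p = j" "succ j = s" "p \<noteq> j" "s \<noteq> j" "p \<noteq> s" "p \<noteq> succ s"
    "p \<noteq> succ (succ s)"
    using k lt(2) unfolding p_def s_def succ_def by (auto simp: mod_Suc)
  have adj: "antihole_adj k x y \<longleftrightarrow> x \<noteq> y \<and> y \<noteq> succ x \<and> x \<noteq> succ y" for x y
    unfolding antihole_adj_def succ_def by blast
  have neq: "p \<noteq> a" "p \<noteq> b" "s \<noteq> a" "s \<noteq> b" "s \<noteq> succ a" "s \<noteq> succ b"
    using assms(5-7) succ_inj[of a p] succ_inj[of b p] succ_inj[of a j] succ_inj[of b j] lt ps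
    unfolding adj s_def by auto
  consider "p \<noteq> succ a" "b \<noteq> succ s" | "a \<noteq> succ s" "p \<noteq> succ b"
    using assms(5) ps(9) succ_inj[of a b] lt by blast
  then show thesis
  proof cases
    case 1
    then show thesis using that[of p s] assms(6,7) ps neq unfolding adj by auto
  next
    case 2
    then show thesis using that[of s p] assms(6,7) ps neq unfolding adj by auto
  qed
qed

lemma antihole_adj_not_bipartite:
  fixes c :: "nat \<Rightarrow> bool"
  assumes "5 \<le> k"
  shows "\<not> (\<forall>i<k. \<forall>j<k. antihole_adj k i j \<longrightarrow> c i \<noteq> c j)"
proof
  assume colouring: "\<forall>i<k. \<forall>j<k. antihole_adj k i j \<longrightarrow> c i \<noteq> c j"
  have "0 < k" "1 < k" "2 < k" "3 < k" "4 < k" using assms by simp_all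
  moreover have "antihole_adj k 0 2 \<and> antihole_adj k 2 4 \<and> antihole_adj k 4 1 \<and>
      antihole_adj k 1 3 \<and> antihole_adj k 3 0"
    using assms by (cases "k = 5") (auto simp: antihole_adj_def)
  ultimately have "c 0 \<noteq> c 2" "c 2 \<noteq> c 4" "c 4 \<noteq> c 1" "c 1 \<noteq> c 3" "c 3 \<noteq> c 0"
    using colouring by blast+
  then show False by blast
qed

text \<open>An orientation in which no vertex has both an in- and an out-neighbour two-colours the
  graph by "has an out-neighbour".\<close>

lemma antihole_orientation_has_two_path:
  assumes k: "5 \<le> k"
    and orient: "\<And>i j. i < k \<Longrightarrow> j < k \<Longrightarrow> antihole_adj k i j \<Longrightarrow> R i j \<or> R j i"
  obtains a j b where "a < k" "j < k" "b < k" "antihole_adj k a j" "antihole_adj k j b"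
    "R a j" "R j b"
proof -
  define source where "source i \<longleftrightarrow> (\<exists>l<k. antihole_adj k i l \<and> R i l)" for i
  obtain i j where ij: "i < k" "j < k" "antihole_adj k i j" "source i = source j"
    using antihole_adj_not_bipartite[OF k, of source] by blast
  from orient[OF ij(1-3)] show thesis
  proof
    assume "R i j"
    then show thesis using that[of i j] ij antihole_adj_sym unfolding source_def by blast
  next
    assume "R j i"
    then show thesis using that[of j i] ij antihole_adj_sym unfolding source_def by blast
  qed
qed

theorem mainTheorem12:
  fixes V :: "'a set" and A :: "('a \<times> 'a) set" and lam :: "'a \<times> 'a \<Rightarrow> nat set"
    and tmax :: nat
  assumes "oriented_tree V A"
    and "\<forall>a \<in> A. lam a \<subseteq> {1..tmax}"
  shows "\<not> has_antihole V (conn_edge V A lam)"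
proof
  note T = assms(1)
  assume "has_antihole V (conn_edge V A lam)"
  then obtain k and f :: "nat \<Rightarrow> 'a" where k: "5 \<le> k" and inj: "inj_on f {0..<k}"
    and H: "\<forall>i<k. \<forall>j<k. i \<noteq> j \<longrightarrow>
      (conn_edge V A lam (f i) (f j) \<longleftrightarrow> \<not> (j = (i + 1) mod k \<or> i = (j + 1) mod k))"
    unfolding has_antihole_def by blast
  have conn: "conn_edge V A lam (f i) (f j) \<longleftrightarrow> antihole_adj k i j" if "i < k" "j < k" for i j
    using H that by (cases "i = j") (simp_all add: conn_edge_def antihole_adj_def)
  define R where "R i j \<longleftrightarrow> temporal_path_from_to A lam (f i) (f j)" for i j
  obtain a j b where abj: "a < k" "j < k" "b < k" "antihole_adj k a j" "antihole_adj k j b"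
    and relay: "R a j" "R j b"
    using antihole_orientation_has_two_path[OF k, of R] conn unfolding R_def conn_edge_def by metis
  have fj_ne: "f j \<noteq> f a" "f j \<noteq> f b"
    using conn[OF abj(1,2)] conn[OF abj(2,3)] abj(4,5) unfolding conn_edge_def by auto
  show False
  proof (cases "a = b")
    case True
    then show ?thesis using temporal_path_from_to_asym[OF T] relay fj_ne unfolding R_def by metis
  next
    case False
    obtain e d where ed: "e < k" "d < k" "e \<noteq> j" "d \<noteq> j"
      "\<not> antihole_adj k j e" "\<not> antihole_adj k j d"
      "antihole_adj k a e" "antihole_adj k e d" "antihole_adj k d b"
      using antihole_adj_detour[OF k abj(1-3) False abj(4,5)] by blast
    have "f j \<noteq> f e" "f j \<noteq> f d" using inj_onD[OF inj] abj ed by fastforce+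
    then have "f j \<notin> {f a, f e, f d, f b}" using fj_ne by blast
    with conn abj ed have "\<not> (R a j \<and> R j b)"
      unfolding R_def
      by (intro temporal_relay_blocked_by_detour[OF T, where e = "f e" and d = "f d"]) simp_all
    then show ?thesis using relay by blast
  qed
qed

end
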